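(* Let $G_1=(T_1,A_1)$ and $G_2=(T_2,A_2)$ be games such that $T_1,T_2,A_1,A_2$ are at most countable and both $G_1$ and $G_2$ are injective in $\mathbf{Games}_{emb}$ with respect to embeddings between finite games. If $G=(T,A)\le G_1$ is a finite game and $f\colon G\to G_2$ is a game embedding, then $f$ extends to an isomorphism $\tilde f\colon G_1\to G_2$, i.e. a bijective chronological map $\tilde f\colon T_1\to T_2$ with $\tilde f|_T=f$ and $\overline{\tilde f}(R)\in A_2\iff R\in A_1$ for all $R\in\mathrm{Run}(T_1)$.
   Context: A game tree is $T\subseteq M^{<\omega}$ (some set $M$) closed under initial segments such that every $t\in T$ has an extension $t^\frown x\in T$; $|t|$ is the length and $t\restriction k$ the initial segment of length $k$. $\mathrm{Run}(T)=\{R\in M^\omega:R\restriction n\in T\ \forall n\}$. A game is $(T,A)$ with $A\subseteq\mathrm{Run}(T)$; it is finite if $\mathrm{Run}(T)$ is finite. $(T,A)\le(T',A')$ means $T\subseteq T'$ and $A=A'\cap\mathrm{Run}(T)$. A chronological map $f\colon T_1\to T_2$ satisfies $|f(t)|=|t|$, $f(t\restriction k)=f(t)\restriction k$, and induces $\bar f$ on runs by $\bar f(R)\restriction n=f(R\restriction n)$. A game embedding $(T_1,A_1)\to(T_2,A_2)$ is an injective chronological $f$ with $\bar f(R)\in A_2\iff R\in A_1$ for all runs $R$. $\mathbf{Games}_{emb}$ is the category of games with game embeddings. A game $X$ is injective in $\mathbf{Games}_{emb}$ with respect to embeddings between finite games if for all finite games $C,D$, every game embedding $g\colon C\to D$ and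 every game embedding $f\colon C\to X$ there is a game embedding $h\colon D\to X$ with $h\circ g=f$. *)

theory Defs
  imports "HOL-Library.Countable_Set"
begin

definition restr :: "(nat \<Rightarrow> 'm) \<Rightarrow> nat \<Rightarrow> 'm list" where
  "restr R n = map R [0..<n]"

definition game_tree :: "'m list set \<Rightarrow> bool" where
  "game_tree T \<longleftrightarrow> (\<forall>t\<in>T. \<forall>k. take k t \<in> T) \<and> (\<forall>t\<in>T. \<exists>x. t @ [x] \<in> T)"

definition runs :: "'m list set \<Rightarrow> (nat \<Rightarrow> 'm) set" where
  "runs T = {R. \<forall>n. restr R n \<in> T}"

definition game :: "'m list set \<Rightarrow> (nat \<Rightarrow> 'm) set \<Rightarrow> bool" where
  "game T A \<longleftrightarrow> game_tree T \<and> A \<subseteq> runs T"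

definition finite_game :: "'m list set \<Rightarrow> (nat \<Rightarrow> 'm) set \<Rightarrow> bool" where
  "finite_game T A \<longleftrightarrow> game T A \<and> finite (runs T)"

definition game_le :: "'m list set \<Rightarrow> (nat \<Rightarrow> 'm) set \<Rightarrow> 'm list set \<Rightarrow> (nat \<Rightarrow> 'm) set \<Rightarrow> bool" where
  "game_le T A T' A' \<longleftrightarrow> T \<subseteq> T' \<and> A = A' \<inter> runs T"

definition chronological :: "('a list \<Rightarrow> 'b list) \<Rightarrow> 'a list set \<Rightarrow> 'b list set \<Rightarrow> bool" where
  "chronological f T1 T2 \<longleftrightarrow>
     (\<forall>t\<in>T1. f t \<in> T2 \<and> length (f t) = length t \<and> (\<forall>k. f (take k t) = take k (f t)))"

text \<open>Induced map on runs: \<open>run_map f R \<restriction> n = f (R \<restriction> n)\<close>.\<close>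
definition run_map :: "('a list \<Rightarrow> 'b list) \<Rightarrow> (nat \<Rightarrow> 'a) \<Rightarrow> (nat \<Rightarrow> 'b)" where
  "run_map f R = (\<lambda>n. f (restr R (Suc n)) ! n)"

definition game_embedding ::
  "('a list \<Rightarrow> 'b list) \<Rightarrow> 'a list set \<Rightarrow> (nat \<Rightarrow> 'a) set \<Rightarrow> 'b list set \<Rightarrow> (nat \<Rightarrow> 'b) set \<Rightarrow> bool" where
  "game_embedding f T1 A1 T2 A2 \<longleftrightarrow>
     chronological f T1 T2 \<and> inj_on f T1 \<and>
     (\<forall>R\<in>runs T1. run_map f R \<in> A2 \<longleftrightarrow> R \<in> A1)"

text \<open>Finite games have countable
trees, hence every finite game is isomorphic to one with moves in \<open>nat\<close>; so it suffices
to quantify over finite games with move type \<open>nat\<close>.\<close>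
definition injective_fin :: "'m list set \<Rightarrow> (nat \<Rightarrow> 'm) set \<Rightarrow> bool" where
  "injective_fin X XA \<longleftrightarrow>
     (\<forall>(CT :: nat list set) CA (DT :: nat list set) DA g f.
        finite_game CT CA \<longrightarrow> finite_game DT DA \<longrightarrow>
        game_embedding g CT CA DT DA \<longrightarrow> game_embedding f CT CA X XA \<longrightarrow>
        (\<exists>h. game_embedding h DT DA X XA \<and> (\<forall>t\<in>CT. h (g t) = f t)))"

end

(* Back and forth.  Call an embedding of a finite subgame (S, A1 restricted to the runs of S)
   of G1 into G2 a partial isomorphism.  Injectivity of G2 extends a partial isomorphism to a
   finite subgame containing any prescribed run of G1; since the inverse of a partial isomorphism
   is one from G2 to G1, injectivity of G1 likewise enlarges its image by any prescribed run of G2.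
   Countably many runs suffice to pass through every position and to include every run in A1
   (resp. A2).  Alternating the two steps along enumerations of them yields a chain of partial
   isomorphisms starting at f whose union is a bijection T1 -> T2; a run of G1 and its image are
   classified correctly because each run in A1 eventually lies in the domain of the chain and each
   run in A2 in its image. *)

theory Submission
  imports Defs
begin

section \<open>Positions and runs\<close>

lemma length_restr [simp]: "length (restr R n) = n"
  by (simp add: restr_def)

lemma nth_restr [simp]: "i < n \<Longrightarrow> restr R n ! i = R i"
  by (simp add: restr_def)

lemma take_restr [simp]: "take k (restr R n) = restr R (min k n)"
  by (simp add: restr_def take_map min_def)

lemma restr_Suc: "restr R (Suc n) = restr R n @ [R n]"
  by (simp add: restr_def)

lemma restr_eq_iff: "restr R n = restr Q n \<longleftrightarrow> (\<forall>i<n. R i = Q i)"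
  by (auto simp: restr_def)

lemma runs_mono: "T \<subseteq> T' \<Longrightarrow> runs T \<subseteq> runs T'"
  by (auto simp: runs_def)

lemma restr_in_runs: "R \<in> runs T \<Longrightarrow> restr R n \<in> T"
  by (simp add: runs_def)

lemma game_tree_take: "game_tree T \<Longrightarrow> t \<in> T \<Longrightarrow> take k t \<in> T"
  by (simp add: game_tree_def)

lemma game_tree_restr_range: "game_tree (range (restr R))"
  unfolding game_tree_def
proof (intro conjI ballI allI)
  fix t k assume "t \<in> range (restr R)"
  then show "take k t \<in> range (restr R)" by auto
next
  fix t assume "t \<in> range (restr R)"
  then obtain n where "t = restr R n" by blast
  then show "\<exists>x. t @ [x] \<in> range (restr R)" by (metis rangeI restr_Suc)
qed

lemma game_tree_Un: "game_tree S \<Longrightarrow> game_tree S' \<Longrightarrow> game_tree (S \<union> S')"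
  unfolding game_tree_def by blast

text \<open>A run of \<open>S \<union> range (restr R)\<close> that leaves \<open>S\<close> at some length never returns to it,
  since \<open>S\<close> is closed under prefixes; from then on it follows \<open>R\<close>.\<close>
lemma runs_Un_restr_range:
  assumes "game_tree S"
  shows "runs (S \<union> range (restr R)) = insert R (runs S)"
proof
  show "insert R (runs S) \<subseteq> runs (S \<union> range (restr R))"
    using runs_mono[of S] by (auto simp: runs_def)
  show "runs (S \<union> range (restr R)) \<subseteq> insert R (runs S)"
  proof
    fix Q assume Q: "Q \<in> runs (S \<union> range (restr R))"
    show "Q \<in> insert R (runs S)"
    proof (cases "Q \<in> runs S")
      case False
      then obtain n where n: "restr Q n \<notin> S" by (auto simp: runs_def)
      have "restr Q m = restr R m" if "n \<le> m" for m
      proof -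
        have "restr Q m \<notin> S"
          using game_tree_take[OF assms, of "restr Q m" n] n that by (auto simp: min_def)
        then obtain k where "restr Q m = restr R k" using Q by (auto simp: runs_def)
        then show ?thesis by (metis length_restr)
      qed
      then have "Q i = R i" for i
        using restr_eq_iff[of Q "max n (Suc i)" R] by auto
      then show ?thesis by auto
    qed simp
  qed
qed

lemma game_tree_extends_to_run:
  assumes T: "game_tree T" and t: "t \<in> T"
  obtains R where "R \<in> runs T" "restr R (length t) = t"
proof -
  obtain nx where nx: "\<And>u. u \<in> T \<Longrightarrow> u @ [nx u] \<in> T"
    using T unfolding game_tree_def by metis
  define path where "path n = ((\<lambda>u. u @ [nx u]) ^^ n) t" for n
  have path_T: "path n \<in> T" for n
    by (induction n) (simp_all add: path_def t nx)
  have length_path: "length (path n) = length t + n" for n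
    by (induction n) (simp_all add: path_def)
  have path_append: "\<exists>xs. path (n + k) = path n @ xs" for n k
    by (induction k) (auto simp: path_def)
  define R where "R i = path (Suc i) ! i" for i
  have restr_R: "restr R n = take n (path n)" for n
  proof (rule nth_equalityI)
    fix i assume "i < length (restr R n)"
    then have "i < n" by simp
    moreover obtain xs where "path n = path (Suc i) @ xs"
      using path_append[of "Suc i" "n - Suc i"] \<open>i < n\<close> by auto
    ultimately show "restr R n ! i = take n (path n) ! i"
      by (simp add: R_def nth_append length_path)
  qed (simp add: length_path)
  have "R \<in> runs T"
    using game_tree_take[OF T path_T] by (simp add: runs_def restr_R)
  moreover have "restr R (length t) = t"
    using path_append[of 0 "length t"] by (auto simp: restr_R path_def)
  ultimately show thesis by (rule that)
qed

section \<open>Chronological maps and game embeddings\<close>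

lemma chronological_restr:
  assumes f: "chronological f T T'" and R: "R \<in> runs T"
  shows "f (restr R n) = restr (run_map f R) n"
proof (rule nth_equalityI)
  have RT: "restr R m \<in> T" for m using R by (rule restr_in_runs)
  then show "length (f (restr R n)) = length (restr (run_map f R) n)"
    using f by (simp add: chronological_def)
  fix i assume "i < length (f (restr R n))"
  then have i: "i < n" using f RT by (simp add: chronological_def)
  have "f (restr R n) ! i = take (Suc i) (f (restr R n)) ! i" by simp
  also have "\<dots> = f (take (Suc i) (restr R n)) ! i"
    using f RT by (simp add: chronological_def del: take_restr)
  also have "\<dots> = f (restr R (Suc i)) ! i"
    using i by (simp add: min_def)
  finally show "f (restr R n) ! i = restr (run_map f R) n ! i"
    using i by (simp add: run_map_def)
qed

lemma run_map_in_runs: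
  assumes f: "chronological f T T'" and R: "R \<in> runs T"
  shows "run_map f R \<in> runs T'"
proof -
  have "f (restr R n) \<in> T'" for n
    using f restr_in_runs[OF R] by (simp add: chronological_def)
  then show ?thesis by (simp add: runs_def chronological_restr[OF f R])
qed

lemma run_map_cong: "(\<And>n. f (restr R n) = g (restr R n)) \<Longrightarrow> run_map f R = run_map g R"
  by (simp add: run_map_def)

lemma run_map_comp:
  assumes "chronological f T T'" "R \<in> runs T"
  shows "run_map (g \<circ> f) R = run_map g (run_map f R)"
  unfolding run_map_def[of "g \<circ> f"] run_map_def[of g] by (simp add: chronological_restr[OF assms])

lemma inj_on_run_map:
  assumes f: "chronological f T T'" and inj: "inj_on f T"
  shows "inj_on (run_map f) (runs T)"
proof (rule inj_onI)
  fix R Q assume R: "R \<in> runs T" and Q: "Q \<in> runs T" and eq: "run_map f R = run_map f Q"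
  have "restr R n = restr Q n" for n
  proof (rule inj_onD[OF inj])
    show "f (restr R n) = f (restr Q n)"
      unfolding chronological_restr[OF f R] chronological_restr[OF f Q] eq ..
  qed (use R Q restr_in_runs in auto)
  then show "R = Q" by (meson lessI restr_eq_iff ext)
qed

lemma chronological_comp:
  "chronological f T T' \<Longrightarrow> chronological g T' T'' \<Longrightarrow> chronological (g \<circ> f) T T''"
  by (simp add: chronological_def)

lemma chronological_onto_image: "chronological f T T' \<Longrightarrow> chronological f T (f ` T)"
  by (simp add: chronological_def)

lemma chronological_inv_into:
  assumes C: "game_tree C" and f: "chronological f C X" and inj: "inj_on f C"
  shows "chronological (inv_into C f) (f ` C) C"
  unfolding chronological_def
proof (intro ballI conjI allI)
  fix s assume "s \<in> f ` C"
  then obtain t where t: "t \<in> C" "s = f t" by blast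
  show "inv_into C f s \<in> C" and "length (inv_into C f s) = length s"
    using t inj f by (simp_all add: chronological_def)
  fix k
  have "take k s = f (take k t)" using t f by (simp add: chronological_def)
  then show "inv_into C f (take k s) = take k (inv_into C f s)"
    using t inj game_tree_take[OF C t(1)] by simp
qed

lemma run_map_inv_into:
  assumes f: "chronological f C X" and inj: "inj_on f C" and R: "R \<in> runs C"
  shows "run_map (inv_into C f) (run_map f R) = R"
proof
  fix n
  have "inv_into C f (restr (run_map f R) (Suc n)) = restr R (Suc n)"
    using chronological_restr[OF f R] inj restr_in_runs[OF R] by (metis inv_into_f_f)
  then show "run_map (inv_into C f) (run_map f R) n = R n"
    by (simp add: run_map_def)
qed

lemma runs_image:
  assumes C: "game_tree C" and f: "chronological f C X" and inj: "inj_on f C"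
  shows "runs (f ` C) = run_map f ` runs C"
proof
  show "run_map f ` runs C \<subseteq> runs (f ` C)"
    using run_map_in_runs[OF chronological_onto_image[OF f]] by blast
  show "runs (f ` C) \<subseteq> run_map f ` runs C"
  proof
    fix Q assume Q: "Q \<in> runs (f ` C)"
    have g: "chronological (inv_into C f) (f ` C) C"
      by (rule chronological_inv_into[OF C f inj])
    have "Q = run_map (f \<circ> inv_into C f) Q"
    proof (rule ext)
      fix n
      have "restr Q (Suc n) \<in> f ` C" using Q by (rule restr_in_runs)
      then show "Q n = run_map (f \<circ> inv_into C f) Q n"
        by (simp add: run_map_def f_inv_into_f)
    qed
    also have "\<dots> = run_map f (run_map (inv_into C f) Q)"
      using g Q by (rule run_map_comp)
    finally show "Q \<in> run_map f ` runs C"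
      using run_map_in_runs[OF g Q] by blast
  qed
qed

lemma game_embedding_comp:
  assumes f: "game_embedding f T A T' A'" and g: "game_embedding g T' A' T'' A''"
  shows "game_embedding (g \<circ> f) T A T'' A''"
proof -
  have cf: "chronological f T T'" and cg: "chronological g T' T''"
    using f g by (simp_all add: game_embedding_def)
  have "inj_on (g \<circ> f) T"
    using f g cf
    by (auto simp: game_embedding_def chronological_def intro: comp_inj_on inj_on_subset)
  moreover have "run_map (g \<circ> f) R \<in> A'' \<longleftrightarrow> R \<in> A" if R: "R \<in> runs T" for R
    using f g run_map_in_runs[OF cf R] by (simp add: run_map_comp[OF cf R] game_embedding_def R)
  ultimately show ?thesis
    using chronological_comp[OF cf cg] by (simp add: game_embedding_def)
qed

lemma game_embedding_game_le:
  assumes f: "game_embedding f T A T' A'" and le: "game_le T' A' T'' A''"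
  shows "game_embedding f T A T'' A''"
proof -
  have cf: "chronological f T T'" using f by (simp add: game_embedding_def)
  then have "chronological f T T''" using le by (auto simp: chronological_def game_le_def)
  moreover have "run_map f R \<in> A'' \<longleftrightarrow> R \<in> A" if R: "R \<in> runs T" for R
    using f le run_map_in_runs[OF cf R] R by (auto simp: game_embedding_def game_le_def)
  ultimately show ?thesis using f by (simp add: game_embedding_def)
qed

lemma run_map_id [simp]: "run_map id R = R"
  by (simp add: run_map_def)

lemma game_embedding_id: "game_le T A T' A' \<Longrightarrow> game_embedding id T A T' A'"
  by (auto simp: game_embedding_def game_le_def chronological_def)

lemma game_tree_image:
  assumes C: "game_tree C" and f: "chronological f C X"
  shows "game_tree (f ` C)"
  unfolding game_tree_def
proof (intro conjI ballI allI)
  fix s k assume "s \<in> f ` C"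
  then obtain t where t: "t \<in> C" "s = f t" by blast
  then have "take k s = f (take k t)" using f by (simp add: chronological_def)
  then show "take k s \<in> f ` C" using game_tree_take[OF C t(1)] by blast
next
  fix s assume "s \<in> f ` C"
  then obtain t where t: "t \<in> C" "s = f t" by blast
  obtain x where tx: "t @ [x] \<in> C" using C t(1) by (auto simp: game_tree_def)
  let ?u = "f (t @ [x])"
  have len: "length ?u = Suc (length t)" using f tx by (simp add: chronological_def)
  have "f (take (length t) (t @ [x])) = take (length t) ?u"
    using f tx unfolding chronological_def by blast
  then have pre: "take (length t) ?u = s" using t(2) by simp
  have "?u = take (length t) ?u @ [?u ! length t]"
    using take_Suc_conv_app_nth[of "length t" ?u] len by simp
  then have "?u = s @ [?u ! length t]" by (simp only: pre)
  then show "\<exists>y. s @ [y] \<in> f ` C" using tx by (metis image_eqI)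
qed

lemma game_image:
  assumes C: "game C CA" and f: "chronological f C X" and inj: "inj_on f C"
  shows "game (f ` C) (run_map f ` CA)"
proof -
  have "game_tree C" "CA \<subseteq> runs C" using C by (simp_all add: game_def)
  then show ?thesis
    using game_tree_image[OF _ f] runs_image[OF _ f inj] by (auto simp: game_def)
qed

lemma finite_game_image:
  assumes C: "finite_game C CA" and f: "chronological f C X" and inj: "inj_on f C"
  shows "finite_game (f ` C) (run_map f ` CA)"
proof -
  have "game C CA" "finite (runs C)" "game_tree C"
    using C by (simp_all add: finite_game_def game_def)
  then show ?thesis
    using game_image[OF _ f inj] runs_image[OF _ f inj] by (simp add: finite_game_def)
qed

lemma game_embedding_onto_image:
  assumes C: "game C CA" and f: "chronological f C X" and inj: "inj_on f C"
  shows "game_embedding f C CA (f ` C) (run_map f ` CA)"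
proof -
  have "run_map f R \<in> run_map f ` CA \<longleftrightarrow> R \<in> CA" if "R \<in> runs C" for R
    using inj_on_image_mem_iff[OF inj_on_run_map[OF f inj] that] C by (simp add: game_def)
  then show ?thesis
    using chronological_onto_image[OF f] inj by (simp add: game_embedding_def)
qed

lemma game_embedding_inv_into:
  assumes C: "game C CA" and f: "chronological f C X" and inj: "inj_on f C"
  shows "game_embedding (inv_into C f) (f ` C) (run_map f ` CA) C CA"
proof -
  have tree: "game_tree C" using C by (simp add: game_def)
  have "run_map (inv_into C f) Q \<in> CA \<longleftrightarrow> Q \<in> run_map f ` CA" if "Q \<in> runs (f ` C)" for Q
  proof -
    obtain R where R: "R \<in> runs C" "Q = run_map f R"
      using \<open>Q \<in> runs (f ` C)\<close> runs_image[OF tree f inj] by blast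
    then show ?thesis
      using run_map_inv_into[OF f inj R(1)] game_embedding_onto_image[OF C f inj]
      by (simp add: game_embedding_def)
  qed
  then show ?thesis
    using chronological_inv_into[OF tree f inj] inj_on_inv_into[of "f ` C" f C]
    by (simp add: game_embedding_def)
qed

section \<open>Finite games over arbitrary moves\<close>

lemma finite_game_countable:
  assumes "finite_game D DA"
  shows "countable D"
proof -
  have tree: "game_tree D" and fin: "finite (runs D)"
    using assms by (simp_all add: finite_game_def game_def)
  have "D \<subseteq> (\<Union>R\<in>runs D. range (restr R))"
  proof
    fix t assume "t \<in> D"
    then obtain R where "R \<in> runs D" "restr R (length t) = t"
      using game_tree_extends_to_run[OF tree] by blast
    then show "t \<in> (\<Union>R\<in>runs D. range (restr R))" by (metis UN_I rangeI)
  qed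
  moreover have "countable (\<Union>R\<in>runs D. range (restr R))"
    using fin by (simp add: countable_finite)
  ultimately show ?thesis by (rule countable_subset)
qed

lemma countable_tree_nat_coding:
  fixes D :: "'a list set"
  assumes "countable D"
  obtains E :: "'a list \<Rightarrow> nat list" where "chronological E D UNIV" "inj_on E D"
proof
  define M where "M = \<Union>(set ` D)"
  have "countable M" unfolding M_def using assms by (auto intro: countable_UN countable_finite)
  then show "inj_on (map (to_nat_on M)) D"
    by (intro inj_on_mapI) (simp add: M_def inj_on_to_nat_on)
  show "chronological (map (to_nat_on M)) D UNIV"
    by (simp add: chronological_def take_map)
qed

text \<open>Coding the countably many moves of a finite game into \<open>nat\<close> removes the restriction
  of \<open>injective_fin\<close> to games with moves in \<open>nat\<close>.\<close>
lemma injective_fin_extend: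
  fixes C :: "'c list set" and D :: "'d list set"
  assumes X: "injective_fin X XA" and C: "finite_game C CA" and D: "finite_game D DA"
    and g: "game_embedding g C CA D DA" and f: "game_embedding f C CA X XA"
  shows "\<exists>h. game_embedding h D DA X XA \<and> (\<forall>t\<in>C. h (g t) = f t)"
proof -
  obtain E :: "'d list \<Rightarrow> nat list" where E: "chronological E D UNIV" "inj_on E D"
    using countable_tree_nat_coding[OF finite_game_countable[OF D]] by blast
  have gC: "game C CA" and gD: "game D DA" using C D by (simp_all add: finite_game_def)
  have cg: "chronological g C D" and ig: "inj_on g C" using g by (simp_all add: game_embedding_def)
  let ?e = "E \<circ> g"
  have ce: "chronological ?e C UNIV" using chronological_comp[OF cg E(1)] .
  have ie: "inj_on ?e C"
    using E(2) ig cg by (auto simp: chronological_def intro: comp_inj_on inj_on_subset)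
  let ?C' = "?e ` C" and ?CA' = "run_map ?e ` CA" and ?D' = "E ` D" and ?DA' = "run_map E ` DA"
  let ?e_inv = "inv_into C ?e"
  have e_inv: "game_embedding ?e_inv ?C' ?CA' C CA"
    by (rule game_embedding_inv_into[OF gC ce ie])
  have "game_embedding (E \<circ> (g \<circ> ?e_inv)) ?C' ?CA' ?D' ?DA'"
    using game_embedding_comp[OF game_embedding_comp[OF e_inv g] game_embedding_onto_image[OF gD E]]
    .
  moreover have "game_embedding (f \<circ> ?e_inv) ?C' ?CA' X XA"
    using game_embedding_comp[OF e_inv f] .
  moreover have "finite_game ?C' ?CA'" "finite_game ?D' ?DA'"
    using finite_game_image[OF C ce ie] finite_game_image[OF D E] .
  ultimately obtain h' where h': "game_embedding h' ?D' ?DA' X XA"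
    and h'_ext: "\<forall>s\<in>?C'. h' ((E \<circ> (g \<circ> ?e_inv)) s) = (f \<circ> ?e_inv) s"
    using X unfolding injective_fin_def by blast
  have "game_embedding (h' \<circ> E) D DA X XA"
    using game_embedding_comp[OF game_embedding_onto_image[OF gD E] h'] .
  moreover have "(h' \<circ> E) (g t) = f t" if "t \<in> C" for t
    using h'_ext[rule_format, of "?e t"] that inv_into_f_f[OF ie that] by simp
  ultimately show ?thesis by blast
qed

lemma runs_empty [simp]: "runs {} = {}"
  by (simp add: runs_def)

lemma injective_fin_nonempty:
  assumes "injective_fin X XA"
  shows "X \<noteq> {}"
proof
  assume X: "X = {}"
  let ?D = "range (restr (\<lambda>_. 0 :: nat))"
  have "finite_game ({} :: nat list set) {}"
    by (simp add: finite_game_def game_def game_tree_def)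
  moreover have "finite_game ?D {}"
    using runs_Un_restr_range[of "{}" "\<lambda>_. 0 :: nat"] game_tree_restr_range
    by (simp add: finite_game_def game_def game_tree_def)
  moreover have "game_embedding id {} {} ?D {}" and "game_embedding (\<lambda>_. []) {} {} X XA"
    by (simp_all add: game_embedding_def chronological_def)
  ultimately obtain h where "game_embedding h ?D {} X XA"
    using assms unfolding injective_fin_def by blast
  then have "h (restr (\<lambda>_. 0) 0) \<in> X" by (simp add: game_embedding_def chronological_def)
  then show False using X by simp
qed

section \<open>Back and forth\<close>

definition finite_subgame_embedding ::
  "'a list set \<Rightarrow> (nat \<Rightarrow> 'a) set \<Rightarrow> 'b list set \<Rightarrow> (nat \<Rightarrow> 'b) set \<Rightarrow>
    'a list set \<Rightarrow> ('a list \<Rightarrow> 'b list) \<Rightarrow> bool"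
  where "finite_subgame_embedding T1 A1 T2 A2 S \<phi> \<longleftrightarrow>
    S \<subseteq> T1 \<and> finite_game S (A1 \<inter> runs S) \<and> game_embedding \<phi> S (A1 \<inter> runs S) T2 A2"

lemma finite_subgame_embeddingD:
  assumes "finite_subgame_embedding T1 A1 T2 A2 S \<phi>"
  shows "S \<subseteq> T1" "game_tree S" "chronological \<phi> S T2" "inj_on \<phi> S"
    and "\<And>R. R \<in> runs S \<Longrightarrow> run_map \<phi> R \<in> A2 \<longleftrightarrow> R \<in> A1"
  using assms
  by (auto simp: finite_subgame_embedding_def finite_game_def game_def game_embedding_def)

lemma finite_subgame_embedding_inv_into:
  assumes "finite_subgame_embedding T1 A1 T2 A2 S \<phi>"
  shows "finite_subgame_embedding T2 A2 T1 A1 (\<phi> ` S) (inv_into S \<phi>)"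
proof -
  note \<phi> = finite_subgame_embeddingD[OF assms]
  have fin: "finite_game S (A1 \<inter> runs S)" using assms by (simp add: finite_subgame_embedding_def)
  then have game: "game S (A1 \<inter> runs S)" by (simp add: finite_game_def)
  have A2: "A2 \<inter> runs (\<phi> ` S) = run_map \<phi> ` (A1 \<inter> runs S)"
    using runs_image[OF \<phi>(2-4)] \<phi>(5) by auto
  have "game_le S (A1 \<inter> runs S) T1 A1" using \<phi>(1) by (simp add: game_le_def)
  then have "game_embedding (inv_into S \<phi>) (\<phi> ` S) (A2 \<inter> runs (\<phi> ` S)) T1 A1"
    unfolding A2 by (rule game_embedding_game_le[OF game_embedding_inv_into[OF game \<phi>(3,4)]])
  moreover have "\<phi> ` S \<subseteq> T2" using \<phi>(3) by (auto simp: chronological_def)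
  ultimately show ?thesis
    using finite_game_image[OF fin \<phi>(3,4)] by (simp add: finite_subgame_embedding_def A2)
qed

lemma finite_subgame_embedding_extend_run:
  assumes X: "injective_fin T2 A2" and \<phi>: "finite_subgame_embedding T1 A1 T2 A2 S \<phi>"
    and R: "R \<in> runs T1"
  obtains S' \<phi>' where "finite_subgame_embedding T1 A1 T2 A2 S' \<phi>'" "S \<subseteq> S'"
    "\<forall>t\<in>S. \<phi>' t = \<phi> t" "R \<in> runs S'"
proof -
  let ?S' = "S \<union> range (restr R)"
  have S: "S \<subseteq> T1" "finite_game S (A1 \<inter> runs S)" "game_embedding \<phi> S (A1 \<inter> runs S) T2 A2"
    using \<phi> by (simp_all add: finite_subgame_embedding_def)
  have tree: "game_tree S" using S(2) by (simp add: finite_game_def game_def)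
  have runs': "runs ?S' = insert R (runs S)" by (rule runs_Un_restr_range[OF tree])
  have fin': "finite_game ?S' (A1 \<inter> runs ?S')"
    using S(2) game_tree_Un[OF tree game_tree_restr_range] runs'
    by (auto simp: finite_game_def game_def)
  have "game_le S (A1 \<inter> runs S) ?S' (A1 \<inter> runs ?S')"
    using runs' by (auto simp: game_le_def)
  then obtain h where h: "game_embedding h ?S' (A1 \<inter> runs ?S') T2 A2" "\<forall>t\<in>S. h (id t) = \<phi> t"
    using injective_fin_extend[OF X S(2) fin' game_embedding_id S(3)] by blast
  have "?S' \<subseteq> T1" using S(1) R by (auto intro: restr_in_runs)
  then have "finite_subgame_embedding T1 A1 T2 A2 ?S' h"
    using fin' h(1) by (simp add: finite_subgame_embedding_def)
  then show thesis using that h(2) runs' by simp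
qed

lemma finite_subgame_embedding_extend_image_run:
  assumes X: "injective_fin T1 A1" and \<phi>: "finite_subgame_embedding T1 A1 T2 A2 S \<phi>"
    and Q: "Q \<in> runs T2"
  obtains S' \<phi>' where "finite_subgame_embedding T1 A1 T2 A2 S' \<phi>'" "S \<subseteq> S'"
    "\<forall>t\<in>S. \<phi>' t = \<phi> t" "Q \<in> run_map \<phi>' ` runs S'"
proof -
  note \<phi>D = finite_subgame_embeddingD[OF \<phi>]
  obtain S2 \<psi> where \<psi>: "finite_subgame_embedding T2 A2 T1 A1 S2 \<psi>"
    and S2: "\<phi> ` S \<subseteq> S2" and \<psi>_ext: "\<forall>s\<in>\<phi> ` S. \<psi> s = inv_into S \<phi> s" and Q2: "Q \<in> runs S2"
    using finite_subgame_embedding_extend_run[OF X finite_subgame_embedding_inv_into[OF \<phi>] Q] .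
  note \<psi>D = finite_subgame_embeddingD[OF \<psi>]
  have \<psi>\<phi>: "\<psi> (\<phi> t) = t" if "t \<in> S" for t
    using \<psi>_ext that \<phi>D(4) by simp
  have "S \<subseteq> \<psi> ` S2" using \<psi>\<phi> S2 by (metis image_subset_iff imageI subsetI)
  moreover have "inv_into S2 \<psi> t = \<phi> t" if "t \<in> S" for t
    using \<psi>\<phi>[OF that] S2 that \<psi>D(4) by (metis image_subset_iff inv_into_f_f)
  moreover have "Q \<in> run_map (inv_into S2 \<psi>) ` runs (\<psi> ` S2)"
    using run_map_inv_into[OF \<psi>D(3,4) Q2] run_map_in_runs[OF chronological_onto_image[OF \<psi>D(3)] Q2]
    by (metis image_eqI)
  ultimately show thesis
    using that[OF finite_subgame_embedding_inv_into[OF \<psi>]] by blast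
qed

lemma finite_subgame_embedding_back_and_forth:
  assumes X1: "injective_fin T1 A1" and X2: "injective_fin T2 A2"
    and \<phi>: "finite_subgame_embedding T1 A1 T2 A2 S \<phi>" and R: "R \<in> runs T1" and Q: "Q \<in> runs T2"
  obtains S' \<phi>' where "finite_subgame_embedding T1 A1 T2 A2 S' \<phi>'" "S \<subseteq> S'"
    "\<forall>t\<in>S. \<phi>' t = \<phi> t" "R \<in> runs S'" "Q \<in> run_map \<phi>' ` runs S'"
proof -
  obtain S1 \<phi>1 where \<phi>1: "finite_subgame_embedding T1 A1 T2 A2 S1 \<phi>1" "S \<subseteq> S1"
    "\<forall>t\<in>S. \<phi>1 t = \<phi> t" "R \<in> runs S1"
    using finite_subgame_embedding_extend_run[OF X2 \<phi> R] .
  obtain S' \<phi>' where \<phi>': "finite_subgame_embedding T1 A1 T2 A2 S' \<phi>'" "S1 \<subseteq> S'"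
    "\<forall>t\<in>S1. \<phi>' t = \<phi>1 t" "Q \<in> run_map \<phi>' ` runs S'"
    using finite_subgame_embedding_extend_image_run[OF X1 \<phi>1(1) Q] .
  show thesis
  proof (rule that[OF \<phi>'(1)])
    show "S \<subseteq> S'" "\<forall>t\<in>S. \<phi>' t = \<phi> t" using \<phi>1(2,3) \<phi>'(2,3) by auto
    show "R \<in> runs S'" using runs_mono[OF \<phi>'(2)] \<phi>1(4) by blast
  qed (rule \<phi>'(4))
qed

lemma back_and_forth_chain:
  fixes r1 :: "nat \<Rightarrow> nat \<Rightarrow> 'a" and r2 :: "nat \<Rightarrow> nat \<Rightarrow> 'b"
  assumes X1: "injective_fin T1 A1" and X2: "injective_fin T2 A2"
    and \<phi>0: "finite_subgame_embedding T1 A1 T2 A2 S0 \<phi>0"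
    and r1: "range r1 \<subseteq> runs T1" and r2: "range r2 \<subseteq> runs T2"
  obtains S \<phi> where "S 0 = S0" "\<phi> 0 = \<phi>0"
    "\<And>n. finite_subgame_embedding T1 A1 T2 A2 (S n) (\<phi> n)"
    "\<And>n. S n \<subseteq> S (Suc n)" "\<And>n. \<forall>t\<in>S n. \<phi> (Suc n) t = \<phi> n t"
    "range r1 \<subseteq> (\<Union>n. runs (S n))" "range r2 \<subseteq> (\<Union>n. run_map (\<phi> n) ` runs (S n))"
proof -
  define P where "P n = (\<lambda>(S, \<phi>). finite_subgame_embedding T1 A1 T2 A2 S \<phi> \<and>
    (n = 0 \<longrightarrow> (S, \<phi>) = (S0, \<phi>0)))" for n :: nat
  define Q where "Q n = (\<lambda>(S, \<phi>) (S', \<phi>'). S \<subseteq> S' \<and> (\<forall>t\<in>S. \<phi>' t = \<phi> t) \<and>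
    r1 n \<in> runs S' \<and> r2 n \<in> run_map \<phi>' ` runs S')" for n :: nat
  have "\<exists>y. P (Suc n) y \<and> Q n x y" if "P n x" for n x
  proof -
    obtain S \<phi> where x: "x = (S, \<phi>)" and \<phi>: "finite_subgame_embedding T1 A1 T2 A2 S \<phi>"
      using \<open>P n x\<close> by (auto simp: P_def)
    have "r1 n \<in> runs T1" "r2 n \<in> runs T2" using r1 r2 by auto
    then obtain S' \<phi>' where "finite_subgame_embedding T1 A1 T2 A2 S' \<phi>'" "S \<subseteq> S'"
      "\<forall>t\<in>S. \<phi>' t = \<phi> t" "r1 n \<in> runs S'" "r2 n \<in> run_map \<phi>' ` runs S'"
      by (rule finite_subgame_embedding_back_and_forth[OF X1 X2 \<phi>])
    then have "P (Suc n) (S', \<phi>') \<and> Q n x (S', \<phi>')" by (simp add: P_def Q_def x)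
    then show ?thesis ..
  qed
  moreover have "P 0 (S0, \<phi>0)" using \<phi>0 by (simp add: P_def)
  ultimately obtain x where x: "\<And>n. P n (x n) \<and> Q n (x n) (x (Suc n))"
    using dependent_nat_choice[of P Q] by blast
  define S where "S n = fst (x n)" for n
  define \<phi> where "\<phi> n = snd (x n)" for n
  have P: "finite_subgame_embedding T1 A1 T2 A2 (S n) (\<phi> n) \<and> (n = 0 \<longrightarrow> S n = S0 \<and> \<phi> n = \<phi>0)"
    for n using x[of n] by (simp add: P_def S_def \<phi>_def split_beta)
  have Q: "S n \<subseteq> S (Suc n) \<and> (\<forall>t\<in>S n. \<phi> (Suc n) t = \<phi> n t) \<and>
      r1 n \<in> runs (S (Suc n)) \<and> r2 n \<in> run_map (\<phi> (Suc n)) ` runs (S (Suc n))"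
    for n using x[of n] by (simp add: Q_def S_def \<phi>_def split_beta)
  show thesis
  proof (rule that[of S \<phi>])
    show "range r1 \<subseteq> (\<Union>n. runs (S n))" "range r2 \<subseteq> (\<Union>n. run_map (\<phi> n) ` runs (S n))"
      using Q by blast+
  qed (use P Q in simp_all)
qed

lemma chain_common_extension:
  assumes mono: "\<And>n. S n \<subseteq> S (Suc n)" and compat: "\<And>n. \<forall>t\<in>S n. \<phi> (Suc n) t = \<phi> n t"
  obtains f where "\<And>n t. t \<in> S n \<Longrightarrow> f t = \<phi> n t"
proof -
  have agree: "\<phi> m t = \<phi> n t" if "n \<le> m" "t \<in> S n" for n m t
    using that(1)
  proof (induction m rule: dec_induct)
    case (step m)
    have "t \<in> S m" using lift_Suc_mono_le[of S, OF mono step(1)] that(2) by blast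
    then show ?case using compat step.IH by simp
  qed simp
  define f where "f t = \<phi> (LEAST n. t \<in> S n) t" for t
  have "f t = \<phi> n t" if "t \<in> S n" for n t
  proof -
    let ?m = "LEAST n. t \<in> S n"
    have "?m \<le> n" "t \<in> S ?m" using that by (auto intro: Least_le LeastI)
    then show ?thesis using agree by (simp add: f_def)
  qed
  then show thesis by (rule that)
qed

lemma chain_covers_positions:
  assumes emb: "\<And>n. finite_subgame_embedding T1 A1 T2 A2 (S n) (\<phi> n)"
    and T1: "T1 \<subseteq> (\<Union>k. range (restr (r1 k)))" and r1: "range r1 \<subseteq> (\<Union>n. runs (S n))"
    and T2: "T2 \<subseteq> (\<Union>k. range (restr (r2 k)))" and r2: "range r2 \<subseteq> (\<Union>n. run_map (\<phi> n) ` runs (S n))"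
  shows "T1 \<subseteq> (\<Union>n. S n)" "T2 \<subseteq> (\<Union>n. \<phi> n ` S n)"
proof
  fix t assume "t \<in> T1"
  then obtain k where "t \<in> range (restr (r1 k))" using T1 by blast
  moreover obtain n where "r1 k \<in> runs (S n)" using r1 by blast
  ultimately show "t \<in> (\<Union>n. S n)" using restr_in_runs by blast
next
  show "T2 \<subseteq> (\<Union>n. \<phi> n ` S n)"
  proof
    fix s assume "s \<in> T2"
    then obtain k i where "s = restr (r2 k) i" using T2 by blast
    moreover obtain n R where "R \<in> runs (S n)" "r2 k = run_map (\<phi> n) R" using r2 by blast
    ultimately have "s = \<phi> n (restr R i)"
      using chronological_restr[OF finite_subgame_embeddingD(3)[OF emb]] by simp
    then show "s \<in> (\<Union>n. \<phi> n ` S n)" using restr_in_runs[OF \<open>R \<in> runs (S n)\<close>] by blast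
  qed
qed

lemma chain_limit_bij:
  assumes emb: "\<And>n. finite_subgame_embedding T1 A1 T2 A2 (S n) (\<phi> n)"
    and mono: "\<And>n. S n \<subseteq> S (Suc n)" and f: "\<And>n t. t \<in> S n \<Longrightarrow> f t = \<phi> n t"
    and T1: "T1 \<subseteq> (\<Union>n. S n)" and T2: "T2 \<subseteq> (\<Union>n. \<phi> n ` S n)"
  shows "chronological f T1 T2" "bij_betw f T1 T2"
proof -
  note \<phi> = finite_subgame_embeddingD[OF emb]
  show chron: "chronological f T1 T2"
    unfolding chronological_def
  proof (intro ballI conjI allI)
    fix t assume "t \<in> T1"
    then obtain n where t: "t \<in> S n" using T1 by blast
    then show "f t \<in> T2" "length (f t) = length t"
      using \<phi>(3)[of n] f by (simp_all add: chronological_def)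
    show "f (take k t) = take k (f t)" for k
      using \<phi>(3)[of n] t f[OF t] f[OF game_tree_take[OF \<phi>(2) t]] by (simp add: chronological_def)
  qed
  have "inj_on f T1"
  proof (rule inj_onI)
    fix t u assume "t \<in> T1" "u \<in> T1" and eq: "f t = f u"
    then obtain n m where "t \<in> S n" "u \<in> S m" using T1 by blast
    then have "t \<in> S (max n m)" "u \<in> S (max n m)"
      using lift_Suc_mono_le[of S, OF mono] by (blast intro: max.cobounded1 max.cobounded2)+
    then show "t = u" using eq f inj_onD[OF \<phi>(4)] by metis
  qed
  moreover have "T2 \<subseteq> f ` T1"
  proof
    fix s assume "s \<in> T2"
    then obtain n t where "t \<in> S n" "s = \<phi> n t" using T2 by blast
    then show "s \<in> f ` T1" using f \<phi>(1) by (metis image_eqI subsetD)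
  qed
  ultimately show "bij_betw f T1 T2"
    using chron by (auto simp: bij_betw_def chronological_def)
qed

lemma chain_limit_runs:
  assumes emb: "\<And>n. finite_subgame_embedding T1 A1 T2 A2 (S n) (\<phi> n)"
    and f: "\<And>n t. t \<in> S n \<Longrightarrow> f t = \<phi> n t"
    and chron: "chronological f T1 T2" and inj: "inj_on f T1"
    and A1: "A1 \<subseteq> (\<Union>n. runs (S n))" and A2: "A2 \<subseteq> (\<Union>n. run_map (\<phi> n) ` runs (S n))"
    and R: "R \<in> runs T1"
  shows "run_map f R \<in> A2 \<longleftrightarrow> R \<in> A1"
proof -
  note \<phi> = finite_subgame_embeddingD[OF emb]
  have run_map_f: "run_map f Q = run_map (\<phi> n) Q" if "Q \<in> runs (S n)" for n Q
    using f restr_in_runs[OF that] by (blast intro: run_map_cong)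
  show ?thesis
  proof
    assume "run_map f R \<in> A2"
    then obtain n Q where Q: "Q \<in> runs (S n)" "run_map f R = run_map (\<phi> n) Q" using A2 by blast
    then have "Q \<in> runs T1" using runs_mono[OF \<phi>(1)] by blast
    then have "Q = R"
      using inj_onD[OF inj_on_run_map[OF chron inj], of Q R] R Q run_map_f by simp
    then show "R \<in> A1" using \<phi>(5) Q \<open>run_map f R \<in> A2\<close> by simp
  next
    assume "R \<in> A1"
    then obtain n where "R \<in> runs (S n)" using A1 by blast
    then show "run_map f R \<in> A2" using \<phi>(5) run_map_f \<open>R \<in> A1\<close> by simp
  qed
qed

lemma countable_game_run_enumeration:
  fixes T :: "'a list set"
  assumes game: "game T A" and "countable T" "countable A" "T \<noteq> {}"
  obtains r :: "nat \<Rightarrow> nat \<Rightarrow> 'a"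
  where "range r \<subseteq> runs T" "A \<subseteq> range r" "T \<subseteq> (\<Union>n. range (restr (r n)))"
proof -
  have tree: "game_tree T" and A: "A \<subseteq> runs T" using game by (simp_all add: game_def)
  have "\<forall>t\<in>T. \<exists>R. R \<in> runs T \<and> restr R (length t) = t"
    using game_tree_extends_to_run[OF tree] by blast
  then obtain \<rho> where \<rho>: "\<And>t. t \<in> T \<Longrightarrow> \<rho> t \<in> runs T \<and> restr (\<rho> t) (length t) = t"
    by (metis bchoice)
  let ?B = "\<rho> ` T \<union> A"
  have "?B \<noteq> {}" "countable ?B" using assms by auto
  then have B: "range (from_nat_into ?B) = ?B" by (rule range_from_nat_into)
  show thesis
  proof (rule that[of "from_nat_into ?B"])
    show "range (from_nat_into ?B) \<subseteq> runs T" "A \<subseteq> range (from_nat_into ?B)"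
      using B \<rho> A by auto
    show "T \<subseteq> (\<Union>n. range (restr (from_nat_into ?B n)))"
    proof
      fix t assume t: "t \<in> T"
      then obtain n where "from_nat_into ?B n = \<rho> t" using B by (metis UnI1 imageI rangeE)
      then show "t \<in> (\<Union>n. range (restr (from_nat_into ?B n)))"
        using \<rho>[OF t] by (metis UN_I UNIV_I rangeI)
    qed
  qed
qed

theorem mainTheorem5:
  fixes T1 :: "'a list set" and A1 :: "(nat \<Rightarrow> 'a) set"
    and T2 :: "'b list set" and A2 :: "(nat \<Rightarrow> 'b) set"
    and T :: "'a list set" and A :: "(nat \<Rightarrow> 'a) set"
    and f :: "'a list \<Rightarrow> 'b list"
  assumes "game T1 A1" and "game T2 A2"
    and "countable T1" and "countable T2" and "countable A1" and "countable A2"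
    and "injective_fin T1 A1" and "injective_fin T2 A2"
    and "finite_game T A" and "game_le T A T1 A1"
    and "game_embedding f T A T2 A2"
  shows "\<exists>f'. chronological f' T1 T2 \<and> bij_betw f' T1 T2 \<and> (\<forall>t\<in>T. f' t = f t) \<and>
              (\<forall>R\<in>runs T1. run_map f' R \<in> A2 \<longleftrightarrow> R \<in> A1)"
proof -
  have init: "finite_subgame_embedding T1 A1 T2 A2 T f"
    using assms(9-11) by (auto simp: finite_subgame_embedding_def game_le_def)
  obtain r1 :: "nat \<Rightarrow> nat \<Rightarrow> 'a"
    where r1: "range r1 \<subseteq> runs T1" "A1 \<subseteq> range r1" "T1 \<subseteq> (\<Union>n. range (restr (r1 n)))"
    by (rule countable_game_run_enumeration[OF assms(1,3,5) injective_fin_nonempty[OF assms(7)]])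
  obtain r2 :: "nat \<Rightarrow> nat \<Rightarrow> 'b"
    where r2: "range r2 \<subseteq> runs T2" "A2 \<subseteq> range r2" "T2 \<subseteq> (\<Union>n. range (restr (r2 n)))"
    by (rule countable_game_run_enumeration[OF assms(2,4,6) injective_fin_nonempty[OF assms(8)]])
  obtain S :: "nat \<Rightarrow> 'a list set" and \<phi> :: "nat \<Rightarrow> 'a list \<Rightarrow> 'b list" where "S 0 = T" "\<phi> 0 = f"
    and emb: "\<And>n. finite_subgame_embedding T1 A1 T2 A2 (S n) (\<phi> n)"
    and mono: "\<And>n. S n \<subseteq> S (Suc n)" and compat: "\<And>n. \<forall>t\<in>S n. \<phi> (Suc n) t = \<phi> n t"
    and runs1: "range r1 \<subseteq> (\<Union>n. runs (S n))"
    and runs2: "range r2 \<subseteq> (\<Union>n. run_map (\<phi> n) ` runs (S n))"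
    using back_and_forth_chain[OF assms(7,8) init r1(1) r2(1)] by blast
  obtain f' where f': "\<And>n t. t \<in> S n \<Longrightarrow> f' t = \<phi> n t"
    using chain_common_extension[of S \<phi>, OF mono compat] by blast
  have "T1 \<subseteq> (\<Union>n. S n)" "T2 \<subseteq> (\<Union>n. \<phi> n ` S n)"
    using chain_covers_positions[OF emb r1(3) runs1 r2(3) runs2] .
  then have chron: "chronological f' T1 T2" and bij: "bij_betw f' T1 T2"
    using chain_limit_bij[where S = S and \<phi> = \<phi>, OF emb mono f'] by blast+
  have "\<forall>R\<in>runs T1. run_map f' R \<in> A2 \<longleftrightarrow> R \<in> A1"
    using chain_limit_runs[where S = S and \<phi> = \<phi>, OF emb f' chron bij_betw_imp_inj_on[OF bij]
        subset_trans[OF r1(2) runs1] subset_trans[OF r2(2) runs2]] by blast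
  then show ?thesis using chron bij f'[of _ 0] \<open>S 0 = T\<close> \<open>\<phi> 0 = f\<close> by auto
qed

end
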